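(* Let $n,N\ge1$ and positive integers $r_1,\dots,r_N,r$ with $r_i\le r\le\lfloor(n-1)/2\rfloor$. Consider either (a) $d=n$, $m=r_i$, $p=r_i+1$ for some $i$, $\mathcal{A}(y)=\mathcal{H}_{r_i+1}(y)$; or (b) $d=Nn$, $m=r$, $p=r+1$, $\mathcal{A}(y)=[\mathcal{H}_{r+1}(y_1)\cdots\mathcal{H}_{r+1}(y_N)]$ for $y=(y_1^\top,\dots,y_N^\top)^\top$. Fix $\hat y\in\mathbb{R}^d$ and let $\Psi(R)=\inf_{y}\{\frac12\|y-\hat y\|^2: R\mathcal{A}(y)=0\}$ for $R\in\mathbb{R}^{1\times p}$. Let $y_b\in\mathbb{R}^d$ satisfy $\mathrm{rank}(\mathcal{A}(y_b))\le m$ and let $R^0\in\mathbb{R}^{1\times p}\setminus\{0\}$ satisfy $R^0\mathcal{A}(y_b)=0$. Then for any $\widetilde R\in\mathbb{R}^{1\times p}\setminus\{0\}$ with $\Psi(\widetilde R)\le\Psi(R^0)$, we have $\|y_{\widetilde R}-\hat y\|\le\|y_b-\hat y\|$, where $y_{\widetilde R}$ attains the infimum defining $\Psi(\widetilde R)$.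
   Context: For $x\in\mathbb{R}^n$ and $1\le l\le n$, $\mathcal{H}_l(x)\in\mathbb{R}^{l\times(n-l+1)}$ is the Hankel matrix with $(i,j)$ entry $x(i+j-1)$. *)

theory Defs
  imports "Jordan_Normal_Form.DL_Rank"
begin

(* Hankel matrix H_l(x) in R^{l x (n-l+1)} for x in R^n: (i,j) entry (0-based)
   x(i+j), i.e. the paper's 1-based entry x(i+j-1). *)
definition hankel :: "nat \<Rightarrow> real vec \<Rightarrow> real mat" where
  "hankel l x = mat l (dim_vec x - l + 1) (\<lambda>(i,j). x $ (i + j))"

definition block_seg :: "nat \<Rightarrow> nat \<Rightarrow> real vec \<Rightarrow> real vec" where
  "block_seg n k y = vec n (\<lambda>t. y $ (k * n + t))"

(* [H_l(y_1) ... H_l(y_N)] : horizontal concatenation of N Hankel blocks,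
   each of size l x (n-l+1) *)
definition block_hankel :: "nat \<Rightarrow> nat \<Rightarrow> nat \<Rightarrow> real vec \<Rightarrow> real mat" where
  "block_hankel N n l y = mat l (N * (n - l + 1))
     (\<lambda>(i,j). hankel l (block_seg n (j div (n - l + 1)) y) $$ (i, j mod (n - l + 1)))"

definition vnorm :: "real vec \<Rightarrow> real" where
  "vnorm v = sqrt (\<Sum>i<dim_vec v. (v $ i)^2)"

definition Psi :: "(real vec \<Rightarrow> real mat) \<Rightarrow> nat \<Rightarrow> real vec \<Rightarrow> real mat \<Rightarrow> real" where
  "Psi A d yhat R = Inf {1/2 * (vnorm (y - yhat))^2 | y.
      y \<in> carrier_vec d \<and> R * A y = 0\<^sub>m (dim_row R) (dim_col (A y))}"

end

theory Submission
  imports Defs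
begin

(* yb is feasible for the problem defining Psi(R0), so
   1/2 ||yR - yhat||^2 = Psi(Rt) <= Psi(R0) <= 1/2 ||yb - yhat||^2. *)

lemma vnorm_nonneg: "0 \<le> vnorm v"
  unfolding vnorm_def by (simp add: sum_nonneg)

lemma Psi_le_feasible:
  assumes "y \<in> carrier_vec d" and "R * A y = 0\<^sub>m (dim_row R) (dim_col (A y))"
  shows "Psi A d yhat R \<le> 1/2 * (vnorm (y - yhat))^2"
  unfolding Psi_def
proof (rule cInf_lower)
  show "1/2 * (vnorm (y - yhat))^2 \<in> {1/2 * (vnorm (y - yhat))^2 | y.
      y \<in> carrier_vec d \<and> R * A y = 0\<^sub>m (dim_row R) (dim_col (A y))}"
    using assms by blast
  show "bdd_below {1/2 * (vnorm (y - yhat))^2 | y.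
      y \<in> carrier_vec d \<and> R * A y = 0\<^sub>m (dim_row R) (dim_col (A y))}"
    by (rule bdd_belowI[where m = 0]) (use zero_le_power2 in fastforce)
qed

theorem theorem4p4:
  fixes n N r :: nat and rs :: "nat \<Rightarrow> nat"
    and d m p :: nat and A :: "real vec \<Rightarrow> real mat"
    and yhat yb yR :: "real vec" and R0 Rt :: "real mat"
  assumes "n \<ge> 1" and "N \<ge> 1" and "r \<ge> 1"
    and rs: "\<forall>i<N. 1 \<le> rs i \<and> rs i \<le> r" and "r \<le> (n - 1) div 2"
    and cases: "(\<exists>i<N. d = n \<and> m = rs i \<and> p = rs i + 1 \<and> A = hankel (rs i + 1))
             \<or> (d = N * n \<and> m = r \<and> p = r + 1 \<and> A = block_hankel N n (r + 1))"
    and "yhat \<in> carrier_vec d"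
    and "yb \<in> carrier_vec d" and "vec_space.rank (dim_row (A yb)) (A yb) \<le> m"
    and "R0 \<in> carrier_mat 1 p" and "R0 \<noteq> 0\<^sub>m 1 p"
    and "R0 * A yb = 0\<^sub>m 1 (dim_col (A yb))"
    and "Rt \<in> carrier_mat 1 p" and "Rt \<noteq> 0\<^sub>m 1 p"
    and "Psi A d yhat Rt \<le> Psi A d yhat R0"
    and "yR \<in> carrier_vec d" and "Rt * A yR = 0\<^sub>m 1 (dim_col (A yR))"
    and "1/2 * (vnorm (yR - yhat))^2 = Psi A d yhat Rt"
  shows "vnorm (yR - yhat) \<le> vnorm (yb - yhat)"
proof -
  have "dim_row R0 = 1" using \<open>R0 \<in> carrier_mat 1 p\<close> by simp
  then have "Psi A d yhat R0 \<le> 1/2 * (vnorm (yb - yhat))^2"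
    using Psi_le_feasible \<open>yb \<in> carrier_vec d\<close> \<open>R0 * A yb = 0\<^sub>m 1 (dim_col (A yb))\<close>
    by metis
  then have "(vnorm (yR - yhat))^2 \<le> (vnorm (yb - yhat))^2"
    using \<open>Psi A d yhat Rt \<le> Psi A d yhat R0\<close>
      \<open>1/2 * (vnorm (yR - yhat))^2 = Psi A d yhat Rt\<close> by linarith
  then show ?thesis
    using power2_le_imp_le vnorm_nonneg by blast
qed

end
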